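(* For $0<p<q<1$, \[ (1-q)\,d(p,q)\le d_{\mathrm{Pois}}(p,q)\le d(p,q). \]
   Context: $d(p,q)=p\log(p/q)+(1-p)\log((1-p)/(1-q))$ is the Bernoulli Kullback–Leibler divergence and $d_{\mathrm{Pois}}(p,q)=p\log(p/q)+q-p$ the Poisson Kullback–Leibler divergence. *)

theory Defs
  imports Complex_Main
begin

definition kl_bern :: "real \<Rightarrow> real \<Rightarrow> real" where
  "kl_bern p q = p * ln (p / q) + (1 - p) * ln ((1 - p) / (1 - q))"

definition kl_pois :: "real \<Rightarrow> real \<Rightarrow> real" where
  "kl_pois p q = p * ln (p / q) + q - p"

end

theory Submission
  imports Defs
begin

text \<open>The upper bound is \<open>ln t \<le> t - 1\<close> applied to \<open>(1 - q) / (1 - p)\<close>. For the lower bound,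
  the gap \<open>kl_pois x q - (1 - q) * kl_bern x q\<close> has derivative \<open>- kl_bern q x \<le> 0\<close> in \<open>x\<close>
  and vanishes at \<open>x = q\<close>, so it is nonnegative for \<open>x \<le> q\<close>.\<close>

lemma kl_pois_le_kl_bern:
  fixes p q :: real
  assumes "p < 1" and "q < 1"
  shows "kl_pois p q \<le> kl_bern p q"
proof -
  have "(1 - p) * ln ((1 - q) / (1 - p)) \<le> (1 - p) * ((1 - q) / (1 - p) - 1)"
    using assms by (intro mult_left_mono ln_le_minus_one) auto
  also have "\<dots> = p - q"
    using assms by (simp add: field_simps)
  finally show ?thesis
    using assms by (simp add: kl_bern_def kl_pois_def ln_div right_diff_distrib)
qed

lemma kl_bern_nonneg:
  fixes p q :: real
  assumes "0 < p" "p < 1" "0 < q" "q < 1"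
  shows "0 \<le> kl_bern p q"
proof -
  have "p * ln (q / p) \<le> p * (q / p - 1)"
    using assms by (intro mult_left_mono ln_le_minus_one) auto
  moreover have "(1 - p) * ln ((1 - q) / (1 - p)) \<le> (1 - p) * ((1 - q) / (1 - p) - 1)"
    using assms by (intro mult_left_mono ln_le_minus_one) auto
  moreover have "p * (q / p - 1) + (1 - p) * ((1 - q) / (1 - p) - 1) = 0"
    using assms by (simp add: field_simps)
  ultimately show ?thesis
    using assms by (simp add: kl_bern_def ln_div right_diff_distrib)
qed

lemma kl_pois_minus_scaled_kl_bern_derivative:
  fixes q x :: real
  assumes "0 < x" "x < 1" "0 < q" "q < 1"
  shows "((\<lambda>x. kl_pois x q - (1 - q) * kl_bern x q) has_real_derivative - kl_bern q x) (at x)"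
  unfolding kl_pois_def kl_bern_def using assms
  by (auto intro!: derivative_eq_intros) (simp_all add: ln_div field_simps)

lemma scaled_kl_bern_le_kl_pois:
  fixes p q :: real
  assumes "0 < p" "p \<le> q" "q < 1"
  shows "(1 - q) * kl_bern p q \<le> kl_pois p q"
proof -
  define g where "g x = kl_pois x q - (1 - q) * kl_bern x q" for x
  have g_deriv: "(g has_real_derivative - kl_bern q x) (at x)" if "p \<le> x" "x \<le> q" for x
    unfolding g_def using that assms
    by (intro kl_pois_minus_scaled_kl_bern_derivative) auto
  have "g q \<le> g p"
  proof (rule DERIV_nonpos_imp_decreasing_open[OF \<open>p \<le> q\<close>])
    fix x assume "p < x" "x < q"
    with assms have "(g has_real_derivative - kl_bern q x) (at x)" "0 \<le> kl_bern q x"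
      by (auto intro: g_deriv kl_bern_nonneg)
    then show "\<exists>y. (g has_real_derivative y) (at x) \<and> y \<le> 0"
      by auto
  next
    show "continuous_on {p..q} g"
      using g_deriv by (intro continuous_at_imp_continuous_on ballI DERIV_isCont) auto
  qed
  moreover have "g q = 0"
    by (simp add: g_def kl_pois_def kl_bern_def)
  ultimately show ?thesis
    by (simp add: g_def)
qed

theorem lemma8:
  fixes p q :: real
  assumes "0 < p" and "p < q" and "q < 1"
  shows "(1 - q) * kl_bern p q \<le> kl_pois p q \<and> kl_pois p q \<le> kl_bern p q"
  using assms scaled_kl_bern_le_kl_pois kl_pois_le_kl_bern by auto

end
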